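(* Let $k$ be a finite extension of $\mathbb{Q}_p$ and $L$ a finite-dimensional solvable Lie algebra over $k$ which is CA. Then $L$ is either abelian, or metabelian of the form $C\ltimes N$, where $N$ and $C$ are abelian, $\dim C\leq\dim N$, and $C$ acts fixed-point-freely on $N$.
   Context: A Lie algebra is CA if the centralizer of each of its nonzero elements is abelian. $C$ acts fixed-point-freely on $N$ if for $c\in C$, $n\in N$, $[c,n]=0$ implies $c=0$ or $n=0$. *)

theory Defs
  imports Complex_Main "HOL-Computational_Algebra.Primes"
begin

text \<open>Z_p as the inverse limit of Z/p^n Z: compatible sequences of residues.\<close>
definition padic_ints :: "int \<Rightarrow> (nat \<Rightarrow> int) set" where
  "padic_ints p = {f. \<forall>n. 0 \<le> f n \<and> f n < p ^ n \<and> f (Suc n) mod p ^ n = f n}"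

definition padic_add :: "int \<Rightarrow> (nat \<Rightarrow> int) \<Rightarrow> (nat \<Rightarrow> int) \<Rightarrow> (nat \<Rightarrow> int)" where
  "padic_add p f g = (\<lambda>n. (f n + g n) mod p ^ n)"

definition padic_mult :: "int \<Rightarrow> (nat \<Rightarrow> int) \<Rightarrow> (nat \<Rightarrow> int) \<Rightarrow> (nat \<Rightarrow> int)" where
  "padic_mult p f g = (\<lambda>n. (f n * g n) mod p ^ n)"

definition padic_one :: "int \<Rightarrow> (nat \<Rightarrow> int)" where
  "padic_one p = (\<lambda>n. 1 mod p ^ n)"

text \<open>The field k is a finite extension of Q_p: there is an injective ring homomorphism
  Z_p \<rightarrow> k (which extends uniquely to Q_p = Z_p[1/p]), and k is spanned, as a vector space
  over the image of Q_p (elements phi(a)/p^n), by a finite set.\<close>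
definition finite_ext_Qp :: "int \<Rightarrow> 'k::field itself \<Rightarrow> bool" where
  "finite_ext_Qp p (_::'k itself) \<longleftrightarrow> prime p \<and>
     (\<exists>\<phi> :: (nat \<Rightarrow> int) \<Rightarrow> 'k.
        inj_on \<phi> (padic_ints p) \<and>
        (\<forall>f\<in>padic_ints p. \<forall>g\<in>padic_ints p.
            \<phi> (padic_add p f g) = \<phi> f + \<phi> g \<and> \<phi> (padic_mult p f g) = \<phi> f * \<phi> g) \<and>
        \<phi> (padic_one p) = 1 \<and>
        (\<exists>B :: 'k set. finite B \<and>
           (\<forall>x. \<exists>c. (\<forall>b\<in>B. \<exists>a\<in>padic_ints p. \<exists>m::nat. c b = \<phi> a / of_int p ^ m)
                    \<and> x = (\<Sum>b\<in>B. c b * b))))"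

definition lie_algebra :: "('k::field \<Rightarrow> 'l::ab_group_add \<Rightarrow> 'l) \<Rightarrow> ('l \<Rightarrow> 'l \<Rightarrow> 'l) \<Rightarrow> bool" where
  "lie_algebra scale br \<longleftrightarrow> vector_space scale \<and>
     (\<forall>x y z. br (x + y) z = br x z + br y z) \<and>
     (\<forall>x y z. br x (y + z) = br x y + br x z) \<and>
     (\<forall>a x y. br (scale a x) y = scale a (br x y)) \<and>
     (\<forall>a x y. br x (scale a y) = scale a (br x y)) \<and>
     (\<forall>x. br x x = 0) \<and>
     (\<forall>x y z. br x (br y z) + br y (br z x) + br z (br x y) = 0)"

definition lie_fin_dim :: "('k::field \<Rightarrow> 'l::ab_group_add \<Rightarrow> 'l) \<Rightarrow> bool" where
  "lie_fin_dim scale \<longleftrightarrow> (\<exists>B. finite B \<and> module.span scale B = UNIV)"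

definition abelian_set :: "('l \<Rightarrow> 'l \<Rightarrow> 'l::zero) \<Rightarrow> 'l set \<Rightarrow> bool" where
  "abelian_set br S \<longleftrightarrow> (\<forall>x\<in>S. \<forall>y\<in>S. br x y = 0)"

definition lie_abelian :: "('l \<Rightarrow> 'l \<Rightarrow> 'l::zero) \<Rightarrow> bool" where
  "lie_abelian br \<longleftrightarrow> abelian_set br UNIV"

definition centralizer :: "('l \<Rightarrow> 'l \<Rightarrow> 'l::zero) \<Rightarrow> 'l \<Rightarrow> 'l set" where
  "centralizer br x = {y. br x y = 0}"

definition lie_CA :: "('l \<Rightarrow> 'l \<Rightarrow> 'l::zero) \<Rightarrow> bool" where
  "lie_CA br \<longleftrightarrow> (\<forall>x. x \<noteq> 0 \<longrightarrow> abelian_set br (centralizer br x))"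

fun derived :: "('k::field \<Rightarrow> 'l::ab_group_add \<Rightarrow> 'l) \<Rightarrow> ('l \<Rightarrow> 'l \<Rightarrow> 'l) \<Rightarrow> nat \<Rightarrow> 'l set" where
  "derived scale br 0 = UNIV"
| "derived scale br (Suc n) =
     module.span scale {br x y | x y. x \<in> derived scale br n \<and> y \<in> derived scale br n}"

definition lie_solvable :: "('k::field \<Rightarrow> 'l::ab_group_add \<Rightarrow> 'l) \<Rightarrow> ('l \<Rightarrow> 'l \<Rightarrow> 'l) \<Rightarrow> bool" where
  "lie_solvable scale br \<longleftrightarrow> (\<exists>n. derived scale br n = {0})"

definition lie_metabelian :: "('k::field \<Rightarrow> 'l::ab_group_add \<Rightarrow> 'l) \<Rightarrow> ('l \<Rightarrow> 'l \<Rightarrow> 'l) \<Rightarrow> bool" where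
  "lie_metabelian scale br \<longleftrightarrow> abelian_set br (derived scale br 1)"

definition subalgebra :: "('k::field \<Rightarrow> 'l::ab_group_add \<Rightarrow> 'l) \<Rightarrow> ('l \<Rightarrow> 'l \<Rightarrow> 'l) \<Rightarrow> 'l set \<Rightarrow> bool" where
  "subalgebra scale br S \<longleftrightarrow> module.subspace scale S \<and> (\<forall>x\<in>S. \<forall>y\<in>S. br x y \<in> S)"

definition lie_ideal :: "('k::field \<Rightarrow> 'l::ab_group_add \<Rightarrow> 'l) \<Rightarrow> ('l \<Rightarrow> 'l \<Rightarrow> 'l) \<Rightarrow> 'l set \<Rightarrow> bool" where
  "lie_ideal scale br N \<longleftrightarrow> module.subspace scale N \<and> (\<forall>x. \<forall>y\<in>N. br x y \<in> N)"

definition semidirect_decomp :: "('k::field \<Rightarrow> 'l::ab_group_add \<Rightarrow> 'l) \<Rightarrow> ('l \<Rightarrow> 'l \<Rightarrow> 'l) \<Rightarrow> 'l set \<Rightarrow> 'l set \<Rightarrow> bool" where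
  "semidirect_decomp scale br C N \<longleftrightarrow> subalgebra scale br C \<and> lie_ideal scale br N \<and>
     C \<inter> N = {0} \<and> (\<forall>x. \<exists>c\<in>C. \<exists>n\<in>N. x = c + n)"

definition fixed_point_free :: "('l \<Rightarrow> 'l \<Rightarrow> 'l::zero) \<Rightarrow> 'l set \<Rightarrow> 'l set \<Rightarrow> bool" where
  "fixed_point_free br C N \<longleftrightarrow> (\<forall>c\<in>C. \<forall>n\<in>N. br c n = 0 \<longrightarrow> c = 0 \<or> n = 0)"

end

theory Submission
  imports Defs "HOL-Computational_Algebra.Polynomial"
begin

(* Let a be a nonzero element of a nonzero abelian ideal. By the CA property its centralizer N
   is an abelian ideal, and every x outside N acts injectively, hence bijectively, on N.
   If [u, [u, w]] lies in N but c = [u, w] does not, then ad u and (ad c)^-1 ad w satisfy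
   [P, R] = 1 on N, which is impossible on a nonzero finite-dimensional space in characteristic 0.
   Descending the derived series this gives [L, L] <= N, so L is metabelian; for any x outside N,
   L is the semidirect sum of the abelian centralizer C of x and N, C acts fixed-point-freely,
   and c |-> [c, a] embeds C into N. *)

sublocale vector_space \<subseteq> endo: vector_space_pair scale scale ..

sublocale finite_dimensional_vector_space \<subseteq> endo: finite_dimensional_vector_space_pair_1 scale Basis scale ..

definition poly_op :: "('a::field \<Rightarrow> 'b::ab_group_add \<Rightarrow> 'b) \<Rightarrow> ('b \<Rightarrow> 'b) \<Rightarrow> 'a poly \<Rightarrow> 'b \<Rightarrow> 'b"
  where "poly_op scale R q x = (\<Sum>i\<le>degree q. scale (coeff q i) ((R ^^ i) x))"

context vector_space
begin

lemma poly_op_eq_sum_lessThan: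
  "degree q < n \<Longrightarrow> poly_op scale R q x = (\<Sum>i<n. coeff q i *s (R ^^ i) x)"
  unfolding poly_op_def by (rule sum.mono_neutral_left) (auto simp: coeff_eq_0)

lemma poly_op_0 [simp]: "poly_op scale R 0 x = 0"
  by (simp add: poly_op_def)

lemma poly_op_add: "poly_op scale R (p + q) x = poly_op scale R p x + poly_op scale R q x"
proof -
  define n where "n = Suc (max (degree p) (degree q))"
  have "degree (p + q) < n" "degree p < n" "degree q < n"
    using degree_add_le_max[of p q] by (auto simp: n_def)
  then show ?thesis
    by (simp add: poly_op_eq_sum_lessThan[of _ n] scale_left_distrib sum.distrib)
qed

lemma poly_op_smult: "poly_op scale R (smult a q) x = a *s poly_op scale R q x"
proof -
  have "degree (smult a q) < Suc (degree q)"
    using degree_smult_le[of a q] by simp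
  then show ?thesis
    by (simp add: poly_op_eq_sum_lessThan[of _ "Suc (degree q)"] scale_sum_right
        del: sum.lessThan_Suc)
qed

context
  fixes R :: "'b \<Rightarrow> 'b"
  assumes linear_R: "Vector_Spaces.linear scale scale R"
begin

lemma poly_op_pCons: "poly_op scale R (pCons a p) x = a *s x + R (poly_op scale R p x)"
proof -
  define n where "n = Suc (degree p)"
  have degree_p: "degree p < n"
    by (simp add: n_def)
  have "degree (pCons a p) < Suc n"
    using degree_pCons_le[of a p] by (simp add: n_def)
  then have "poly_op scale R (pCons a p) x = (\<Sum>i<Suc n. coeff (pCons a p) i *s (R ^^ i) x)"
    by (rule poly_op_eq_sum_lessThan)
  also have "\<dots> = a *s x + (\<Sum>i<n. coeff p i *s R ((R ^^ i) x))"
    by (simp only: sum.lessThan_Suc_shift) (simp del: sum.lessThan_Suc)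
  also have "(\<Sum>i<n. coeff p i *s R ((R ^^ i) x)) = R (\<Sum>i<n. coeff p i *s (R ^^ i) x)"
    by (simp add: endo.linear_sum[OF linear_R] endo.linear_scale[OF linear_R])
  also have "\<dots> = R (poly_op scale R p x)"
    by (simp add: poly_op_eq_sum_lessThan[OF degree_p])
  finally show ?thesis .
qed

lemma poly_op_const: "poly_op scale R [:a:] x = a *s x"
  using poly_op_pCons[of a 0 x] by (simp add: endo.linear_0[OF linear_R])

lemma poly_op_monom: "poly_op scale R (monom a i) x = a *s (R ^^ i) x"
  by (induct i)
    (simp_all add: monom_0 monom_Suc poly_op_const poly_op_pCons
      endo.linear_scale[OF linear_R] endo.linear_0[OF linear_R])

lemma poly_op_mult: "poly_op scale R (p * q) x = poly_op scale R p (poly_op scale R q x)"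
  by (induct p)
    (simp_all add: poly_op_add poly_op_smult poly_op_pCons endo.linear_0[OF linear_R])

lemma linear_poly_op: "Vector_Spaces.linear scale scale (poly_op scale R q)"
proof -
  have "poly_op scale R q (x + y) = poly_op scale R q x + poly_op scale R q y" for x y
    by (induct q) (simp_all add: poly_op_pCons endo.linear_add[OF linear_R] scale_right_distrib)
  moreover have "poly_op scale R q (c *s x) = c *s poly_op scale R q x" for c x
    by (induct q) (simp_all add: poly_op_pCons endo.linear_scale[OF linear_R] scale_right_distrib mult.commute)
  ultimately show ?thesis
    unfolding Vector_Spaces.linear_iff using vector_space_axioms by simp
qed

lemma inj_on_powers_if_no_annihilator:
  assumes no_annihilator: "\<And>q. poly_op scale R q y = 0 \<Longrightarrow> q = 0"
  shows "inj_on (\<lambda>i. (R ^^ i) y) A"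
proof (rule inj_onI, rule ccontr)
  fix i j
  assume "(R ^^ i) y = (R ^^ j) y" "i \<noteq> j"
  then have "poly_op scale R (monom 1 i + monom (-1) j) y = 0"
    by (simp add: poly_op_add poly_op_monom)
  moreover have "coeff (monom (1::'a) i + monom (-1) j) i = 1"
    using \<open>i \<noteq> j\<close> by simp
  ultimately show False
    using no_annihilator by fastforce
qed

lemma independent_powers_if_no_annihilator:
  assumes no_annihilator: "\<And>q. poly_op scale R q y = 0 \<Longrightarrow> q = 0"
  shows "independent ((\<lambda>i. (R ^^ i) y) ` {..m})"
proof (rule independent_if_scalars_zero)
  fix g v
  let ?f = "\<lambda>i. (R ^^ i) y"
  assume sum_0: "(\<Sum>x\<in>?f ` {..m}. g x *s x) = 0" and v: "v \<in> ?f ` {..m}"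
  define q where "q = (\<Sum>i\<le>m. monom (g (?f i)) i)"
  have coeff_q: "coeff q j = (if j \<le> m then g (?f j) else 0)" for j
    by (simp add: q_def coeff_sum)
  then have "degree q < Suc m"
    using degree_le[of m q] by auto
  then have "poly_op scale R q y = (\<Sum>i\<le>m. g (?f i) *s ?f i)"
    by (simp add: poly_op_eq_sum_lessThan coeff_q lessThan_Suc_atMost del: sum.lessThan_Suc)
  also have "\<dots> = 0"
    using sum_0 by (simp add: sum.reindex[OF inj_on_powers_if_no_annihilator[OF no_annihilator]])
  finally have "q = 0"
    by (rule no_annihilator)
  moreover obtain i where "i \<le> m" "v = ?f i"
    using v by blast
  ultimately show "g v = 0"
    using coeff_q[of i] by simp
qed simp

lemma poly_op_mem_subspace:
  assumes "subspace N" and "R ` N \<subseteq> N" and "x \<in> N"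
  shows "poly_op scale R q x \<in> N"
  by (induct q) (use assms in \<open>auto simp: poly_op_pCons subspace_0 subspace_add subspace_scale\<close>)

lemma commutator_poly_op:
  assumes linear_P: "Vector_Spaces.linear scale scale P"
    and N: "subspace N" and "R ` N \<subseteq> N"
    and commutator: "\<And>n. n \<in> N \<Longrightarrow> P (R n) - R (P n) = n"
    and x: "x \<in> N"
  shows "P (poly_op scale R q x) - poly_op scale R q (P x) = poly_op scale R (pderiv q) x"
proof (induct q)
  case 0
  then show ?case by (simp add: endo.linear_0[OF linear_P])
next
  case (pCons a p)
  define y where "y = poly_op scale R p x"
  have "y \<in> N"
    unfolding y_def using poly_op_mem_subspace assms by blast
  then have "P (R y) = y + R (P y)"
    using commutator by (simp add: algebra_simps)
  then have "P (poly_op scale R (pCons a p) x) - poly_op scale R (pCons a p) (P x)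
      = y + R (P y - poly_op scale R p (P x))"
    by (simp add: poly_op_pCons y_def endo.linear_add[OF linear_P] endo.linear_scale[OF linear_P]
        endo.linear_diff[OF linear_R])
  also have "\<dots> = poly_op scale R (pderiv (pCons a p)) x"
    using pCons by (simp add: pderiv_pCons poly_op_add poly_op_pCons y_def)
  finally show ?case .
qed

end

end

lemma pderiv_nonzero_degree_less:
  fixes q :: "'a::field poly"
  assumes "CHAR('a) = 0" and "degree q > 0"
  shows "pderiv q \<noteq> 0" and "degree (pderiv q) < degree q"
proof -
  obtain d where d: "degree q = Suc d"
    using assms(2) gr0_implies_Suc by blast
  have "coeff (pderiv q) d = of_nat (Suc d) * lead_coeff q"
    by (simp add: coeff_pderiv d)
  moreover have "(of_nat (Suc d) :: 'a) \<noteq> 0"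
    using assms(1) by (metis CHAR_eq0_iff zero_less_Suc)
  moreover have "lead_coeff q \<noteq> 0"
    using d by (metis degree_0 leading_coeff_0_iff nat.distinct(1))
  ultimately show "pderiv q \<noteq> 0"
    by (metis coeff_0 mult_eq_0_iff)
  have "degree (pderiv q) \<le> d"
    by (rule degree_le) (simp add: coeff_pderiv coeff_eq_0 d)
  then show "degree (pderiv q) < degree q"
    by (simp add: d)
qed

context finite_dimensional_vector_space
begin

lemma poly_op_annihilates_vector:
  assumes linear_R: "Vector_Spaces.linear scale scale R"
  shows "\<exists>q. q \<noteq> 0 \<and> poly_op scale R q y = 0"
proof (rule ccontr)
  assume "\<nexists>q. q \<noteq> 0 \<and> poly_op scale R q y = 0"
  then have no_annihilator: "q = 0" if "poly_op scale R q y = 0" for q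
    using that by blast
  define m where "m = dim (UNIV :: 'b set)"
  have "card ((\<lambda>i. (R ^^ i) y) ` {..m}) \<le> m"
    unfolding m_def
    using independent_card_le_dim independent_powers_if_no_annihilator[OF linear_R no_annihilator]
    by blast
  then show False
    using card_image[OF inj_on_powers_if_no_annihilator[OF linear_R no_annihilator]] by simp
qed

lemma poly_op_annihilator_exists:
  assumes linear_R: "Vector_Spaces.linear scale scale R"
  shows "\<exists>q. q \<noteq> 0 \<and> (\<forall>x. poly_op scale R q x = 0)"
proof -
  have "\<exists>q. q \<noteq> 0 \<and> (\<forall>b\<in>B. poly_op scale R q b = 0)" if "finite B" for B
    using that
  proof (induct B rule: finite_induct)
    case empty
    show ?case by (intro exI[of _ 1]) simp
  next
    case (insert b B)
    then obtain q where q: "q \<noteq> 0" "\<forall>b\<in>B. poly_op scale R q b = 0"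
      by blast
    obtain r where r: "r \<noteq> 0" "poly_op scale R r (poly_op scale R q b) = 0"
      using poly_op_annihilates_vector[OF linear_R] by blast
    have "\<forall>c\<in>insert b B. poly_op scale R (r * q) c = 0"
      using q r by (auto simp: poly_op_mult[OF linear_R] endo.linear_0[OF linear_poly_op[OF linear_R]])
    then show ?case
      using q r by (intro exI[of _ "r * q"]) simp
  qed
  then obtain q where "q \<noteq> 0" "\<forall>b\<in>Basis. poly_op scale R q b = 0"
    using finite_Basis by blast
  moreover have "poly_op scale R q x = 0" if "\<forall>b\<in>Basis. poly_op scale R q b = 0" for x
    using endo.linear_eq_0_on_span[OF linear_poly_op[OF linear_R], of Basis q x] that span_Basis by simp
  ultimately show ?thesis
    by blast
qed

text \<open>The Weyl algebra has no nonzero finite-dimensional representations in characteristic 0: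
  a nonzero annihilating polynomial of \<open>R\<close> of least degree would have an annihilating
  derivative.\<close>
lemma commutator_eq_id_imp_trivial:
  assumes "CHAR('a) = 0"
    and linear_R: "Vector_Spaces.linear scale scale R"
    and linear_P: "Vector_Spaces.linear scale scale P"
    and N: "subspace N" and R_N: "R ` N \<subseteq> N" and P_N: "P ` N \<subseteq> N"
    and commutator: "\<And>n. n \<in> N \<Longrightarrow> P (R n) - R (P n) = n"
  shows "N = {0}"
proof -
  have "N \<subseteq> {0}" if "q \<noteq> 0" "\<forall>x\<in>N. poly_op scale R q x = 0" for q
    using that
  proof (induct "degree q" arbitrary: q rule: less_induct)
    case less
    show ?case
    proof (cases "degree q = 0")
      case True
      then obtain c where "q = [:c:]"
        using degree0_coeffs by blast
      with less.prems show ?thesis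
        by (auto simp: poly_op_const[OF linear_R])
    next
      case False
      have "poly_op scale R (pderiv q) x = 0" if "x \<in> N" for x
        using commutator_poly_op[OF linear_R linear_P N R_N commutator that, of q]
          less.prems(2) P_N that by (auto simp: endo.linear_0[OF linear_P])
      then show ?thesis
        using less.hyps pderiv_nonzero_degree_less[OF assms(1)] False by blast
    qed
  qed
  then show ?thesis
    using poly_op_annihilator_exists[OF linear_R] subspace_0[OF N] by blast
qed

lemma linear_inj_on_imp_image_eq:
  assumes "Vector_Spaces.linear scale scale f" and "subspace N"
    and "f ` N \<subseteq> N" and "inj_on f N"
  shows "f ` N = N"
proof (rule subspace_dim_equal)
  show "subspace (f ` N)"
    using assms by (simp add: endo.linear_subspace_image)
  have "inj_on f (span N)"
    by (metis assms(2,4) span_eq_iff)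
  then show "dim N \<le> dim (f ` N)"
    using endo.dim_image_eq[OF assms(1)] by simp
qed (use assms in auto)

end

definition padic_of_nat :: "int \<Rightarrow> nat \<Rightarrow> (nat \<Rightarrow> int)" where
  "padic_of_nat p k = (\<lambda>m. int k mod p ^ m)"

lemma padic_of_nat_mem: "p > 0 \<Longrightarrow> padic_of_nat p k \<in> padic_ints p"
  by (simp add: padic_ints_def padic_of_nat_def mod_mod_cancel le_imp_power_dvd)

lemma padic_add_of_nat: "padic_add p (padic_of_nat p a) (padic_of_nat p b) = padic_of_nat p (a + b)"
  unfolding padic_add_def padic_of_nat_def by (simp add: mod_add_eq)

lemma inj_padic_of_nat:
  assumes "p > 1"
  shows "inj (padic_of_nat p)"
proof (rule injI)
  fix a b
  assume eq: "padic_of_nat p a = padic_of_nat p b"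
  have "int k mod p ^ (a + b) = int k" if "k \<le> a + b" for k
  proof -
    have "int k < 2 ^ k"
      using less_exp[of k] by (metis of_nat_less_iff of_nat_numeral of_nat_power)
    also have "(2::int) ^ k \<le> p ^ k"
      using assms by (intro power_mono) auto
    also have "\<dots> \<le> p ^ (a + b)"
      using assms that by (intro power_increasing) auto
    finally show ?thesis
      by simp
  qed
  then show "a = b"
    using fun_cong[OF eq, of "a + b"] by (simp add: padic_of_nat_def)
qed

lemma finite_ext_Qp_CHAR_0:
  assumes "finite_ext_Qp p TYPE('k::field)"
  shows "CHAR('k) = 0"
proof -
  from assms obtain \<phi> :: "(nat \<Rightarrow> int) \<Rightarrow> 'k" where "prime p"
    and inj: "inj_on \<phi> (padic_ints p)"
    and hom: "\<forall>f\<in>padic_ints p. \<forall>g\<in>padic_ints p. \<phi> (padic_add p f g) = \<phi> f + \<phi> g"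
    and one: "\<phi> (padic_one p) = 1"
    unfolding finite_ext_Qp_def by blast
  then have "p > 1"
    by (simp add: prime_gt_1_int)
  then have mem: "padic_of_nat p k \<in> padic_ints p" for k
    by (simp add: padic_of_nat_mem)
  have \<phi>_add: "\<phi> (padic_of_nat p (a + b)) = \<phi> (padic_of_nat p a) + \<phi> (padic_of_nat p b)" for a b
    using hom mem padic_add_of_nat[of p a b] by metis
  have \<phi>_of_nat: "\<phi> (padic_of_nat p k) = of_nat k" for k
  proof (induct k)
    case 0
    show ?case
      using \<phi>_add[of 0 0] unfolding add_0 by (metis add_cancel_right_right of_nat_0)
  next
    case (Suc k)
    have "\<phi> (padic_of_nat p 1) = 1"
      using one by (simp add: padic_one_def padic_of_nat_def)
    then show ?case
      using Suc \<phi>_add[of k 1] by simp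
  qed
  have "of_nat n \<noteq> (0 :: 'k)" if "n > 0" for n
  proof
    assume "of_nat n = (0 :: 'k)"
    then have "\<phi> (padic_of_nat p n) = \<phi> (padic_of_nat p 0)"
      by (simp add: \<phi>_of_nat)
    then have "padic_of_nat p n = padic_of_nat p 0"
      using inj mem by (simp add: inj_on_eq_iff)
    then show False
      using inj_padic_of_nat[OF \<open>p > 1\<close>] that by (simp add: inj_eq)
  qed
  then show ?thesis
    by (simp add: CHAR_eq0_iff)
qed

lemma lie_fin_dim_imp_finite_dimensional:
  assumes "vector_space scale" and "lie_fin_dim scale"
  obtains Basis where "finite_dimensional_vector_space scale Basis"
proof -
  obtain B where B: "finite B" "module.span scale B = UNIV"
    using assms(2) unfolding lie_fin_dim_def by blast
  obtain Basis where Basis: "\<not> module.dependent scale Basis" "UNIV \<subseteq> module.span scale Basis"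
    using vector_space.basis_exists[OF assms(1), of UNIV] by blast
  have "finite Basis"
    using vector_space.independent_span_bound[OF assms(1) B(1) Basis(1)] B(2) by simp
  with Basis have "finite_dimensional_vector_space scale Basis"
    by (intro finite_dimensional_vector_space.intro assms(1) finite_dimensional_vector_space_axioms.intro)
      auto
  then show thesis
    using that by blast
qed

locale fd_lie_algebra = finite_dimensional_vector_space scale Basis
  for scale :: "'k::field \<Rightarrow> 'l::ab_group_add \<Rightarrow> 'l" (infixr "*s" 75) and Basis :: "'l set" +
  fixes br :: "'l \<Rightarrow> 'l \<Rightarrow> 'l"
  assumes lie_algebra: "lie_algebra scale br"
begin

lemma br_add_left: "br (x + y) z = br x z + br y z"
  and br_add_right: "br x (y + z) = br x y + br x z"
  and br_scale_left: "br (c *s x) y = c *s br x y"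
  and br_scale_right: "br x (c *s y) = c *s br x y"
  and br_self [simp]: "br x x = 0"
  and jacobi: "br x (br y z) + br y (br z x) + br z (br x y) = 0"
  using lie_algebra unfolding lie_algebra_def by blast+

lemma linear_br_left: "Vector_Spaces.linear scale scale (\<lambda>x. br x y)"
  unfolding Vector_Spaces.linear_iff using vector_space_axioms by (simp add: br_add_left br_scale_left)

lemma linear_br_right: "Vector_Spaces.linear scale scale (br x)"
  unfolding Vector_Spaces.linear_iff using vector_space_axioms by (simp add: br_add_right br_scale_right)

lemma br_zero_left [simp]: "br 0 y = 0"
  using endo.linear_0[OF linear_br_left] by simp

lemma br_zero_right [simp]: "br x 0 = 0"
  by (rule endo.linear_0[OF linear_br_right])

lemma br_diff_right: "br x (y - z) = br x y - br x z"
  by (rule endo.linear_diff[OF linear_br_right])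

lemma br_anticomm: "br x y = - br y x"
proof -
  have "0 = br (x + y) (x + y)"
    by simp
  also have "\<dots> = br x y + br y x"
    by (simp only: br_add_left br_add_right) simp
  finally have "br x y + br y x = 0"
    by (rule sym)
  then show ?thesis
    by (simp add: eq_neg_iff_add_eq_0)
qed

lemma br_eq_0_commute: "br y x = 0 \<longleftrightarrow> br x y = 0"
  by (subst br_anticomm) simp

lemma br_derivation: "br x (br y z) = br (br x y) z + br y (br x z)"
proof -
  have "br x (br y z) + br y (br z x) + br z (br x y) = 0"
    by (rule jacobi)
  moreover have "br y (br z x) = - br y (br x z)"
    unfolding br_anticomm[of z x] by (rule endo.linear_neg[OF linear_br_right])
  moreover have "br z (br x y) = - br (br x y) z"
    by (rule br_anticomm)
  ultimately show ?thesis
    by (simp add: algebra_simps)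
qed

lemma subspace_centralizer: "subspace (centralizer br x)"
  unfolding centralizer_def by (rule endo.linear_subspace_kernel[OF linear_br_right])

lemma subspace_derived: "subspace (derived scale br n)"
  by (cases n) simp_all

lemma br_mem_derived_Suc:
  "x \<in> derived scale br n \<Longrightarrow> y \<in> derived scale br n \<Longrightarrow> br x y \<in> derived scale br (Suc n)"
  by (auto intro: span_base)

lemma br_mem_derived: "y \<in> derived scale br n \<Longrightarrow> br x y \<in> derived scale br n"
proof (induct n arbitrary: x y)
  case (Suc n)
  let ?G = "{br u v | u v. u \<in> derived scale br n \<and> v \<in> derived scale br n}"
  have "y \<in> span ?G"
    using Suc.prems by simp
  then have "br x y \<in> span ?G"
  proof (induct rule: span_induct_alt)
    case (step c g z)
    then obtain u v where "g = br u v" "u \<in> derived scale br n" "v \<in> derived scale br n"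
      by blast
    moreover have "br (br x u) v \<in> ?G" "br u (br x v) \<in> ?G"
      using Suc.hyps \<open>u \<in> derived scale br n\<close> \<open>v \<in> derived scale br n\<close> by blast+
    ultimately have "br x g \<in> span ?G"
      using br_derivation[of x u v] by (simp add: span_add span_base)
    then show ?case
      using step(2) endo.linear_add[OF linear_br_right] endo.linear_scale[OF linear_br_right]
      by (simp add: span_add span_scale)
  qed (simp add: span_zero)
  then show ?case
    by simp
qed simp

lemma lie_ideal_derived: "lie_ideal scale br (derived scale br n)"
  unfolding lie_ideal_def using subspace_derived br_mem_derived by blast

lemma solvable_imp_abelian_ideal:
  assumes "lie_solvable scale br" and "(UNIV :: 'l set) \<noteq> {0}"
  obtains A where "lie_ideal scale br A" "abelian_set br A" "A \<noteq> {0}"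
proof -
  define m where "m = (LEAST m. derived scale br m = {0})"
  have m: "derived scale br m = {0}"
    using assms(1) unfolding lie_solvable_def m_def by (rule LeastI_ex)
  then obtain j where j: "m = Suc j"
    using assms(2) by (cases m) auto
  then have "derived scale br j \<noteq> {0}"
    unfolding m_def by (metis lessI not_less_Least)
  moreover have "abelian_set br (derived scale br j)"
    using m j br_mem_derived_Suc unfolding abelian_set_def by blast
  ultimately show thesis
    using that lie_ideal_derived by blast
qed

end

locale ca_lie_algebra = fd_lie_algebra scale Basis br
  for scale :: "'k::field \<Rightarrow> 'l::ab_group_add \<Rightarrow> 'l" (infixr "*s" 75) and Basis br +
  assumes CA: "lie_CA br"
begin

lemma abelian_set_centralizer: "x \<noteq> 0 \<Longrightarrow> abelian_set br (centralizer br x)"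
  using CA unfolding lie_CA_def by blast

lemma CA_commute: "x \<noteq> 0 \<Longrightarrow> br x y = 0 \<Longrightarrow> br x z = 0 \<Longrightarrow> br y z = 0"
  using abelian_set_centralizer unfolding abelian_set_def centralizer_def by blast

text \<open>Commuting is an equivalence relation on the nonzero elements of a CA algebra, whose classes
  are the centralizers with 0 removed.\<close>
lemma centralizer_eq:
  assumes "a \<noteq> 0" "n \<noteq> 0" "br a n = 0"
  shows "centralizer br n = centralizer br a"
  using assms CA_commute br_eq_0_commute unfolding centralizer_def by blast

lemma lie_ideal_centralizer:
  assumes A: "lie_ideal scale br A" "abelian_set br A" and a: "a \<in> A" "a \<noteq> 0"
  shows "lie_ideal scale br (centralizer br a)"
  unfolding lie_ideal_def
proof (intro conjI allI ballI subspace_centralizer)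
  fix x n
  assume n: "n \<in> centralizer br a"
  have "br x a \<in> A"
    using A(1) a(1) unfolding lie_ideal_def by blast
  then have "br a x \<in> A"
    using A(1) subspace_neg br_anticomm[of a x] unfolding lie_ideal_def by metis
  then have "br a (br a x) = 0"
    using A(2) a(1) unfolding abelian_set_def by blast
  then have "br (br a x) n = 0"
    using CA_commute[OF a(2)] n unfolding centralizer_def by blast
  then show "br x n \<in> centralizer br a"
    using n br_derivation[of a x n] unfolding centralizer_def by simp
qed

context
  fixes a :: 'l
  assumes a_nonzero: "a \<noteq> 0"
    and ideal_centralizer: "lie_ideal scale br (centralizer br a)"
begin

lemma br_mem_centralizer: "n \<in> centralizer br a \<Longrightarrow> br x n \<in> centralizer br a"
  using ideal_centralizer unfolding lie_ideal_def by blast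

lemma mem_centralizer_if_commute:
  "n \<in> centralizer br a \<Longrightarrow> n \<noteq> 0 \<Longrightarrow> br n y = 0 \<Longrightarrow> y \<in> centralizer br a"
  using centralizer_eq[OF a_nonzero] unfolding centralizer_def by blast

lemma inj_on_br_centralizer:
  assumes "x \<notin> centralizer br a"
  shows "inj_on (br x) (centralizer br a)"
  unfolding endo.linear_inj_on_iff_eq_0[OF linear_br_right subspace_centralizer]
  using assms mem_centralizer_if_commute br_eq_0_commute by blast

lemma br_image_centralizer:
  assumes "x \<notin> centralizer br a"
  shows "br x ` centralizer br a = centralizer br a"
  using linear_inj_on_imp_image_eq[OF linear_br_right subspace_centralizer _ inj_on_br_centralizer]
    br_mem_centralizer assms by blast

lemma br_commute_on_centralizer:
  assumes "br u c \<in> centralizer br a" and "z \<in> centralizer br a"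
  shows "br c (br u z) = br u (br c z)"
  using br_derivation[of u c z] abelian_set_centralizer[OF a_nonzero] assms
  unfolding abelian_set_def by simp

lemma br_inverse_on_centralizer:
  assumes "c \<notin> centralizer br a"
  obtains g where "Vector_Spaces.linear scale scale g"
    and "\<And>n. n \<in> centralizer br a \<Longrightarrow> g n \<in> centralizer br a"
    and "\<And>n. n \<in> centralizer br a \<Longrightarrow> br c (g n) = n"
proof -
  define N where "N = centralizer br a"
  have c: "c \<notin> N"
    using assms by (simp add: N_def)
  have span_N: "span N = N"
    using subspace_centralizer by (simp add: N_def)
  have "inj_on (br c) (span N)"
    unfolding span_N using inj_on_br_centralizer[of c] c by (simp add: N_def)
  then obtain g where linear_g: "Vector_Spaces.linear scale scale g"
    and g_br: "\<forall>n\<in>span N. g (br c n) = n"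
    using endo.linear_inj_on_left_inverse[OF linear_br_right] by blast
  have g: "g n \<in> N \<and> br c (g n) = n" if "n \<in> N" for n
  proof -
    obtain m where "m \<in> N" "n = br c m"
      using br_image_centralizer[of c] c \<open>n \<in> N\<close> unfolding N_def by blast
    then show ?thesis
      using g_br span_N by auto
  qed
  show thesis
    by (rule that[OF linear_g]) (simp_all add: g[unfolded N_def])
qed

text \<open>Otherwise \<open>c = [u, w]\<close> acts invertibly on the centralizer \<open>N\<close> of \<open>a\<close> and commutes there with
  \<open>ad u\<close>, so \<open>ad u\<close> and \<open>(ad c)\<^sup>-\<^sup>1 ad w\<close> satisfy the Weyl relation on \<open>N \<noteq> 0\<close>.\<close>
lemma mem_centralizer_if_br_br_mem:
  assumes "CHAR('k) = 0" and "br u (br u w) \<in> centralizer br a"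
  shows "br u w \<in> centralizer br a"
proof (rule ccontr)
  define N where "N = centralizer br a"
  define c where "c = br u w"
  assume "br u w \<notin> centralizer br a"
  then have c: "c \<notin> N"
    by (simp add: c_def N_def)
  obtain g where linear_g: "Vector_Spaces.linear scale scale g"
    and g: "\<And>n. n \<in> N \<Longrightarrow> g n \<in> N" "\<And>n. n \<in> N \<Longrightarrow> br c (g n) = n"
    using br_inverse_on_centralizer[of c] c unfolding N_def by blast
  define R where "R = g \<circ> br w"
  have linear_R: "Vector_Spaces.linear scale scale R"
    unfolding R_def by (rule Vector_Spaces.linear_compose[OF linear_br_right linear_g])
  have R_N: "R ` N \<subseteq> N"
    using g br_mem_centralizer by (auto simp: R_def N_def)
  have "br u (R n) - R (br u n) = n" if n: "n \<in> N" for n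
  proof -
    have "br w n \<in> N" "br w (br u n) \<in> N"
      using n br_mem_centralizer by (simp_all add: N_def)
    moreover have "br c (br u (g (br w n))) = br u (br c (g (br w n)))"
      using br_commute_on_centralizer assms(2) g(1)[OF \<open>br w n \<in> N\<close>]
      by (simp add: c_def N_def)
    ultimately have "br c (br u (R n) - R (br u n)) = br u (br w n) - br w (br u n)"
      using g by (simp add: R_def br_diff_right)
    also have "\<dots> = br c n"
      using br_derivation[of u w n] by (simp add: c_def)
    finally have "br c (br u (R n) - R (br u n)) = br c n" .
    moreover have "br u (R n) - R (br u n) \<in> N"
      using n R_N br_mem_centralizer subspace_centralizer
      by (auto intro!: subspace_diff simp: N_def)
    ultimately show ?thesis
      using inj_on_br_centralizer[of c] c n by (auto simp: N_def dest: inj_onD)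
  qed
  moreover have "subspace N" "br u ` N \<subseteq> N"
    using subspace_centralizer br_mem_centralizer by (auto simp: N_def)
  ultimately have "N = {0}"
    using commutator_eq_id_imp_trivial[OF assms(1) linear_R linear_br_right _ R_N] by blast
  then show False
    using a_nonzero br_self[of a] unfolding N_def centralizer_def by blast
qed

lemma derived_Suc_subset_centralizer:
  assumes "CHAR('k) = 0" and "derived scale br (Suc (Suc j)) \<subseteq> centralizer br a"
  shows "derived scale br (Suc j) \<subseteq> centralizer br a"
proof -
  have br_mem: "br b x \<in> centralizer br a" if b: "b \<in> derived scale br (Suc j)" for b x
  proof -
    have "br b x \<in> derived scale br (Suc j)"
      using br_mem_derived[OF b] subspace_neg[OF subspace_derived] br_anticomm[of b x] by metis
    then have "br b (br b x) \<in> centralizer br a"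
      using assms(2) br_mem_derived_Suc[OF b] by blast
    then show ?thesis
      by (rule mem_centralizer_if_br_br_mem[OF assms(1)])
  qed
  have "span {br u v | u v. u \<in> derived scale br j \<and> v \<in> derived scale br j} \<subseteq> centralizer br a"
  proof (rule span_minimal[OF _ subspace_centralizer], clarify)
    fix u v
    assume "u \<in> derived scale br j" "v \<in> derived scale br j"
    then have "br (br u v) u \<in> centralizer br a"
      using br_mem br_mem_derived_Suc by blast
    then have "br u (br u v) \<in> centralizer br a"
      using subspace_neg[OF subspace_centralizer] br_anticomm[of u "br u v"] by metis
    then show "br u v \<in> centralizer br a"
      by (rule mem_centralizer_if_br_br_mem[OF assms(1)])
  qed
  then show ?thesis
    by simp
qed

lemma derived_one_subset_centralizer:
  assumes "CHAR('k) = 0" and "lie_solvable scale br"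
  shows "derived scale br 1 \<subseteq> centralizer br a"
proof -
  obtain m where m: "derived scale br m = {0}"
    using assms(2) unfolding lie_solvable_def by blast
  have "m \<noteq> 0"
    using m a_nonzero by (metis derived.simps(1) UNIV_I singletonD)
  then have "1 \<le> m"
    by simp
  then show ?thesis
  proof (induct rule: inc_induct)
    case base
    show ?case
      using m subspace_0[OF subspace_centralizer] by simp
  next
    case (step n)
    then obtain j where "n = Suc j"
      by (metis Suc_le_D One_nat_def)
    then show ?case
      using step.hyps(3) derived_Suc_subset_centralizer[OF assms(1)] by blast
  qed
qed

context
  fixes x :: 'l
  assumes x: "x \<notin> centralizer br a"
begin

lemma x_nonzero: "x \<noteq> 0"
  using x subspace_0[OF subspace_centralizer] by blast

lemma centralizer_inter_centralizer: "centralizer br x \<inter> centralizer br a = {0}"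
proof -
  have "y = 0" if "y \<in> centralizer br x" "y \<in> centralizer br a" for y
  proof (rule ccontr)
    assume "y \<noteq> 0"
    moreover have "br y x = 0"
      using that(1) br_anticomm[of y x] by (simp add: centralizer_def)
    ultimately show False
      using x mem_centralizer_if_commute that(2) by blast
  qed
  then show ?thesis
    using subspace_0[OF subspace_centralizer] by blast
qed

lemma fixed_point_free_centralizer: "fixed_point_free br (centralizer br x) (centralizer br a)"
  unfolding fixed_point_free_def
proof (intro ballI impI disjCI)
  fix c n
  assume c: "c \<in> centralizer br x" and n: "n \<in> centralizer br a" "n \<noteq> 0" and "br c n = 0"
  then have "br n c = 0"
    using br_anticomm[of n c] by simp
  then have "c \<in> centralizer br a"
    using mem_centralizer_if_commute n by blast
  then show "c = 0"
    using c centralizer_inter_centralizer by blast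
qed

lemma semidirect_decomp_centralizer:
  assumes "derived scale br 1 \<subseteq> centralizer br a"
  shows "semidirect_decomp scale br (centralizer br x) (centralizer br a)"
proof -
  have "\<exists>c\<in>centralizer br x. \<exists>n\<in>centralizer br a. z = c + n" for z
  proof -
    have "br x z \<in> centralizer br a"
      using assms br_mem_derived_Suc[of x 0 z] by auto
    then obtain n where n: "n \<in> centralizer br a" "br x z = br x n"
      using br_image_centralizer[OF x] by (metis imageE)
    then have "z - n \<in> centralizer br x"
      by (simp add: centralizer_def br_diff_right)
    then show ?thesis
      using n(1) by (metis diff_add_cancel)
  qed
  moreover have "subalgebra scale br (centralizer br x)"
    unfolding subalgebra_def
  proof (intro conjI ballI subspace_centralizer)
    fix y z
    assume "y \<in> centralizer br x" "z \<in> centralizer br x"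
    then have "br y z = 0"
      using CA_commute x_nonzero unfolding centralizer_def by blast
    then show "br y z \<in> centralizer br x"
      by (simp add: centralizer_def)
  qed
  ultimately show ?thesis
    unfolding semidirect_decomp_def
    using ideal_centralizer centralizer_inter_centralizer by blast
qed

text \<open>Fixed-point-freeness makes \<open>c \<mapsto> [c, a]\<close> an embedding of the centralizer of \<open>x\<close> into that of \<open>a\<close>.\<close>
lemma dim_centralizer_le: "dim (centralizer br x) \<le> dim (centralizer br a)"
proof -
  let ?f = "\<lambda>c. br c a"
  have "inj_on ?f (centralizer br x)"
    unfolding endo.linear_inj_on_iff_eq_0[OF linear_br_left subspace_centralizer]
    using fixed_point_free_centralizer a_nonzero br_self[of a]
    unfolding fixed_point_free_def centralizer_def by blast
  moreover have "span (centralizer br x) = centralizer br x"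
    using subspace_centralizer by simp
  ultimately have "dim (?f ` centralizer br x) = dim (centralizer br x)"
    using endo.dim_image_eq[OF linear_br_left] by metis
  moreover have "?f ` centralizer br x \<subseteq> centralizer br a"
    using br_mem_centralizer[of a] by (auto simp: centralizer_def)
  ultimately show ?thesis
    by (metis dim_subset)
qed

end

end

lemma nonabelian_imp_metabelian_semidirect:
  assumes "CHAR('k) = 0" and "lie_solvable scale br" and "\<not> lie_abelian br"
  shows "lie_metabelian scale br \<and>
    (\<exists>C N. semidirect_decomp scale br C N \<and> abelian_set br C \<and> abelian_set br N \<and>
       dim C \<le> dim N \<and> fixed_point_free br C N)"
proof -
  obtain y z where "br y z \<noteq> 0"
    using assms(3) unfolding lie_abelian_def abelian_set_def by blast
  then have "(UNIV :: 'l set) \<noteq> {0}"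
    by (metis UNIV_I br_zero_left singletonD)
  then obtain A where A: "lie_ideal scale br A" "abelian_set br A" "A \<noteq> {0}"
    using solvable_imp_abelian_ideal[OF assms(2)] by blast
  then obtain a where a: "a \<in> A" "a \<noteq> 0"
    using subspace_0[of A] unfolding lie_ideal_def by blast
  have ideal: "lie_ideal scale br (centralizer br a)"
    using lie_ideal_centralizer[OF A(1,2) a] .
  have derived: "derived scale br 1 \<subseteq> centralizer br a"
    using derived_one_subset_centralizer[OF a(2) ideal assms(1,2)] .
  then have "lie_metabelian scale br"
    using abelian_set_centralizer[OF a(2)] unfolding lie_metabelian_def abelian_set_def by blast
  obtain x where x: "x \<notin> centralizer br a"
    using abelian_set_centralizer[OF a(2)] \<open>br y z \<noteq> 0\<close> unfolding abelian_set_def by blast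
  have "semidirect_decomp scale br (centralizer br x) (centralizer br a) \<and>
      abelian_set br (centralizer br x) \<and> abelian_set br (centralizer br a) \<and>
      dim (centralizer br x) \<le> dim (centralizer br a) \<and>
      fixed_point_free br (centralizer br x) (centralizer br a)"
    using semidirect_decomp_centralizer[OF a(2) ideal x derived]
      abelian_set_centralizer[OF x_nonzero[OF a(2) ideal x]] abelian_set_centralizer[OF a(2)]
      dim_centralizer_le[OF a(2) ideal x] fixed_point_free_centralizer[OF a(2) ideal x]
    by (intro conjI)
  with \<open>lie_metabelian scale br\<close> show ?thesis
    by blast
qed

end

theorem proposition2p3:
  fixes p :: int
    and scale :: "'k::field \<Rightarrow> 'l::ab_group_add \<Rightarrow> 'l"
    and br :: "'l \<Rightarrow> 'l \<Rightarrow> 'l"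
  assumes "finite_ext_Qp p TYPE('k)"
    and "lie_algebra scale br"
    and "lie_fin_dim scale"
    and "lie_solvable scale br"
    and "lie_CA br"
  shows "lie_abelian br \<or>
         (lie_metabelian scale br \<and>
          (\<exists>C N. semidirect_decomp scale br C N \<and>
                 abelian_set br C \<and> abelian_set br N \<and>
                 vector_space.dim scale C \<le> vector_space.dim scale N \<and>
                 fixed_point_free br C N))"
proof (cases "lie_abelian br")
  case False
  have "vector_space scale"
    using assms(2) unfolding lie_algebra_def by blast
  then obtain Basis where "finite_dimensional_vector_space scale Basis"
    using assms(3) by (rule lie_fin_dim_imp_finite_dimensional)
  then interpret ca_lie_algebra scale Basis br
    using assms(2,5) by (simp add: ca_lie_algebra_def ca_lie_algebra_axioms_def
        fd_lie_algebra_def fd_lie_algebra_axioms_def)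
  show ?thesis
    using nonabelian_imp_metabelian_semidirect[OF finite_ext_Qp_CHAR_0[OF assms(1)] assms(4) False]
    by blast
qed simp

end
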